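(* Let $U\subset X$ range over regular regions and, for each such $U$, let $v$ range over the admissible variations with respect to $U$. Then $\phi\in\Lambda^k_h$ satisfies the localized discrete Euler--Lagrange equations $$0=\delta S_U[\phi]\cdot v=\big(\partial_2\mathcal{L}(j^1\phi),v\big)_{L^2\Lambda^k(U)}+\big(\partial_3\mathcal{L}(j^1\phi),dv\big)_{L^2\Lambda^{k+1}(U)}$$ for all regular $U$ and all admissible $v$ if and only if $\phi$ satisfies the discrete Euler--Lagrange equations $$0=\big(\partial_2\mathcal{L}(j^1\phi),v\big)_{L^2\Lambda^k(X)}+\big(\partial_3\mathcal{L}(j^1\phi),dv\big)_{L^2\Lambda^{k+1}(X)}\quad\text{for all } v\in\mathring{\Lambda}^k_h .$$
   Context: $X$ is a bounded $(n+1)$-dimensional polyhedral domain with a Riemannian or Lorentzian metric (giving $L^2$ inner products on forms) and a finite element triangulation $\mathcal{T}_h$. $H\Lambda^m(X)$ denotes square-integrable $m$-forms with square-integrable exterior derivative. A Lagrangian density $\mathcal{L}$ assigns to $(x,\phi,\psi)$, $\phi\in H\Lambda^k$, $\psi\in dH\Lambda^k$, an $(n+1)$-form; $j^1\phi=(x,\phi,d\phi)$; for a region $U$, $S_U[\phi]=\int_U\mathcal{L}(j^1\phi)$. $\partial_2\mathcal{L}(j^1\phi)\in L^2\Lambda^k$ and $\partial_3\mathcal{L}(j^1\phi)\in L^2\Lambda^{k+1}$ denote the Riesz representatives of the variations of $\mathcal{L}$ with respect to its second and third arguments. $\Lambda^k_h\subset H\Lambda^k(X)$ is a finite element space with a basis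 of locally supported shape functions associated to nodes of the mesh, and $\mathring{\Lambda}^k_h$ is the subspace of elements with vanishing trace on $\partial X$. A node $i$ is an interior point of a region $U$ if $U$ contains all simplices touching $i$; $\bar U$ is the union of all simplices touching interior nodes of $U$; $U$ is regular if $U=\bar U$. The admissible variations with respect to a regular $U$ are the $v\in\mathring{\Lambda}^k_h$ with $v|_U\in\mathring{\Lambda}^k_h(U)$ (vanishing trace on $\partial U$). *)

theory Defs
  imports "HOL-Analysis.Analysis"
begin

text \<open>Simplices of the triangulation: a finite set T of type 's.
  Nodes: a finite set N of type 'n; touches i s means node i touches simplex s.
  B \<subseteq> N: nodes lying on the boundary of X (their degrees of freedom are
  the ones killed by the vanishing-trace condition on the boundary of X).
  Forms of degree k live in the real vector space 'a (L2 k-forms), forms of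
  degree k+1 in 'b; d is the exterior derivative.
  ip0 s, ip1 s: L2 inner products of k-forms, (k+1)-forms over simplex s.
  A region is a set of simplices; L2 products over a region are sums over its
  simplices (simplices overlap in measure zero only).\<close>

definition interior_node :: "('n \<Rightarrow> 's \<Rightarrow> bool) \<Rightarrow> 's set \<Rightarrow> 's set \<Rightarrow> 'n \<Rightarrow> bool" where
  "interior_node touches T U i \<longleftrightarrow> (\<forall>s\<in>T. touches i s \<longrightarrow> s \<in> U)"

definition region_closure :: "('n \<Rightarrow> 's \<Rightarrow> bool) \<Rightarrow> 'n set \<Rightarrow> 's set \<Rightarrow> 's set \<Rightarrow> 's set" where
  "region_closure touches N T U =
     {s\<in>T. \<exists>i\<in>N. interior_node touches T U i \<and> touches i s}"

definition regular_region :: "('n \<Rightarrow> 's \<Rightarrow> bool) \<Rightarrow> 'n set \<Rightarrow> 's set \<Rightarrow> 's set \<Rightarrow> bool" where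
  "regular_region touches N T U \<longleftrightarrow> U \<subseteq> T \<and> U = region_closure touches N T U"

definition fe_fun :: "'n set \<Rightarrow> ('n \<Rightarrow> 'a::real_vector) \<Rightarrow> ('n \<Rightarrow> real) \<Rightarrow> 'a" where
  "fe_fun N basis c = (\<Sum>i\<in>N. c i *\<^sub>R basis i)"

definition fe_space :: "'n set \<Rightarrow> ('n \<Rightarrow> 'a::real_vector) \<Rightarrow> 'a set" where
  "fe_space N basis = {fe_fun N basis c | c. True}"

definition fe_space0 :: "'n set \<Rightarrow> 'n set \<Rightarrow> ('n \<Rightarrow> 'a::real_vector) \<Rightarrow> 'a set" where
  "fe_space0 N B basis = {fe_fun N basis c | c. \<forall>i\<in>B. c i = 0}"

text \<open>Admissible variations with respect to a region U: elements of the
  vanishing-trace space whose restriction to U has vanishing trace on the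
  boundary of U, i.e. whose degrees of freedom at nodes touching U but not
  interior to U (the nodes on the boundary of U) vanish.\<close>
definition admissible ::
  "('n \<Rightarrow> 's \<Rightarrow> bool) \<Rightarrow> 'n set \<Rightarrow> 'n set \<Rightarrow> 's set \<Rightarrow> ('n \<Rightarrow> 'a::real_vector) \<Rightarrow> 's set \<Rightarrow> 'a set" where
  "admissible touches N B T basis U =
     {fe_fun N basis c | c. (\<forall>i\<in>B. c i = 0) \<and>
        (\<forall>i\<in>N. (\<exists>s\<in>U. touches i s) \<and> \<not> interior_node touches T U i \<longrightarrow> c i = 0)}"

definition L2_on :: "('s \<Rightarrow> 'a \<Rightarrow> 'a \<Rightarrow> real) \<Rightarrow> 's set \<Rightarrow> 'a \<Rightarrow> 'a \<Rightarrow> real" where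
  "L2_on ip U u w = (\<Sum>s\<in>U. ip s u w)"

text \<open>First jet of a field (the x-dependence is absorbed in the Lagrangian derivatives).\<close>
definition jet1 :: "('a \<Rightarrow> 'b) \<Rightarrow> 'a \<Rightarrow> 'a \<times> 'b" where
  "jet1 d \<phi> = (\<phi>, d \<phi>)"

end

theory Submission
  imports Defs
begin

text \<open>Both sides are linear in the variation, so on a finite element function they are
  combinations \<open>\<Sum>i. c i * r\<^sub>U i\<close> of nodal residuals \<open>r\<^sub>U i\<close>, the variation in the direction
  of the shape function of node \<open>i\<close>. As shape functions are supported on the simplices
  touching their node, \<open>r\<^sub>U i = r\<^sub>X i\<close> at interior nodes of \<open>U\<close> and \<open>r\<^sub>U i = 0\<close> at nodes not
  touching \<open>U\<close>; an admissible variation has no other degrees of freedom. Hence its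
  localized variation is the global variation of a vanishing-trace function. Conversely
  the union of all simplices touching some node is a regular region, all nodes are
  interior to it, and every vanishing-trace function is admissible for it.\<close>

locale fe_variational =
  fixes T :: "'s set" and touches :: "'n \<Rightarrow> 's \<Rightarrow> bool" and N :: "'n set"
    and basis :: "'n \<Rightarrow> 'a::real_vector" and d :: "'a \<Rightarrow> 'b::real_vector"
    and ip0 :: "'s \<Rightarrow> 'a \<Rightarrow> 'a \<Rightarrow> real" and ip1 :: "'s \<Rightarrow> 'b \<Rightarrow> 'b \<Rightarrow> real"
  assumes finite_T: "finite T"
    and linear_d: "linear d"
    and linear_ip0: "\<And>s u. linear (ip0 s u)" and linear_ip1: "\<And>s w. linear (ip1 s w)"
    and basis_local: "\<And>i s u w. i \<in> N \<Longrightarrow> s \<in> T \<Longrightarrow> \<not> touches i s \<Longrightarrow>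
           ip0 s u (basis i) = 0 \<and> ip1 s w (d (basis i)) = 0"
begin

text \<open>With \<open>a = \<partial>\<^sub>2\<L>(j\<^sup>1\<phi>)\<close> and \<open>b = \<partial>\<^sub>3\<L>(j\<^sup>1\<phi>)\<close> this is \<open>\<delta>S\<^sub>U[\<phi>]\<cdot>v\<close>.\<close>

definition variation :: "'a \<Rightarrow> 'b \<Rightarrow> 's set \<Rightarrow> 'a \<Rightarrow> real" where
  "variation a b U v = L2_on ip0 U a v + L2_on ip1 U b (d v)"

lemma variation_fe_fun:
  "variation a b U (fe_fun N basis c) = (\<Sum>i\<in>N. c i * variation a b U (basis i))"
proof -
  have "variation a b U (fe_fun N basis c)
      = (\<Sum>s\<in>U. \<Sum>i\<in>N. c i * (ip0 s a (basis i) + ip1 s b (d (basis i))))"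
    unfolding variation_def L2_on_def fe_fun_def sum.distrib[symmetric]
    by (simp add: real_vector.linear_sum[OF linear_d] real_vector.linear_sum[OF linear_ip0]
        real_vector.linear_sum[OF linear_ip1] real_vector.linear_scale[OF linear_d]
        real_vector.linear_scale[OF linear_ip0] real_vector.linear_scale[OF linear_ip1]
        sum.distrib distrib_left)
  also have "\<dots> = (\<Sum>i\<in>N. c i * variation a b U (basis i))"
    unfolding variation_def L2_on_def sum.distrib[symmetric]
    by (subst sum.swap) (simp add: sum_distrib_left)
  finally show ?thesis .
qed

lemma variation_basis_eq_if_interior_node:
  assumes "U \<subseteq> T" and "i \<in> N" and "interior_node touches T U i"
  shows "variation a b U (basis i) = variation a b T (basis i)"
proof -
  have "(\<Sum>s\<in>U. ip0 s a (basis i) + ip1 s b (d (basis i)))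
      = (\<Sum>s\<in>T. ip0 s a (basis i) + ip1 s b (d (basis i)))"
    by (rule sum.mono_neutral_left)
      (use assms finite_T basis_local in \<open>auto simp: interior_node_def\<close>)
  then show ?thesis
    by (simp add: variation_def L2_on_def sum.distrib)
qed

lemma variation_basis_eq_0_if_untouched:
  assumes "U \<subseteq> T" and "i \<in> N" and "\<forall>s\<in>U. \<not> touches i s"
  shows "variation a b U (basis i) = 0"
  using assms basis_local by (auto simp: variation_def L2_on_def subsetD intro!: sum.neutral)

lemma variation_admissible_eq_fe_space0:
  assumes "U \<subseteq> T" and "v \<in> admissible touches N B T basis U"
  obtains v' where "v' \<in> fe_space0 N B basis" and "variation a b U v = variation a b T v'"
proof -
  obtain c where v: "v = fe_fun N basis c" and c_B: "\<forall>i\<in>B. c i = 0"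
    and c_boundary: "\<forall>i\<in>N. (\<exists>s\<in>U. touches i s) \<and> \<not> interior_node touches T U i \<longrightarrow> c i = 0"
    using assms(2) unfolding admissible_def by blast
  define c' where "c' i = (if interior_node touches T U i then c i else 0)" for i
  have "fe_fun N basis c' \<in> fe_space0 N B basis"
    unfolding fe_space0_def c'_def using c_B by auto
  moreover have "c i * variation a b U (basis i) = c' i * variation a b T (basis i)"
    if "i \<in> N" for i
  proof (cases "interior_node touches T U i")
    case True
    then show ?thesis
      using that assms(1) variation_basis_eq_if_interior_node by (simp add: c'_def)
  next
    case False
    then have "c i = 0 \<or> variation a b U (basis i) = 0"
      using that assms(1) c_boundary variation_basis_eq_0_if_untouched by blast
    with False show ?thesis by (auto simp: c'_def)
  qed
  then have "variation a b U v = variation a b T (fe_fun N basis c')"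
    unfolding v variation_fe_fun by (rule sum.cong[OF refl])
  ultimately show thesis by (rule that)
qed

lemma global_EL_imp_local_EL:
  assumes "\<forall>v\<in>fe_space0 N B basis. variation a b T v = 0"
    and "U \<subseteq> T" and "v \<in> admissible touches N B T basis U"
  shows "variation a b U v = 0"
  using variation_admissible_eq_fe_space0[OF assms(2,3)] assms(1) by metis

text \<open>\<open>T\<close> itself need not be regular: it may contain simplices that touch no node.\<close>

definition touched_region :: "'s set" where
  "touched_region = {s\<in>T. \<exists>i\<in>N. touches i s}"

lemma interior_node_touched_region: "i \<in> N \<Longrightarrow> interior_node touches T touched_region i"
  by (auto simp: interior_node_def touched_region_def)

lemma regular_touched_region: "regular_region touches N T touched_region"
  using interior_node_touched_region
  by (auto simp: regular_region_def region_closure_def touched_region_def)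

lemma fe_space0_subset_admissible_touched_region:
  "fe_space0 N B basis \<subseteq> admissible touches N B T basis touched_region"
  using interior_node_touched_region by (auto simp: fe_space0_def admissible_def)

lemma variation_touched_region:
  "variation a b touched_region (fe_fun N basis c) = variation a b T (fe_fun N basis c)"
  unfolding variation_fe_fun
  using variation_basis_eq_if_interior_node[OF _ _ interior_node_touched_region]
  by (simp add: touched_region_def)

lemma local_EL_imp_global_EL:
  assumes "\<forall>U. regular_region touches N T U \<longrightarrow>
             (\<forall>v\<in>admissible touches N B T basis U. variation a b U v = 0)"
  shows "\<forall>v\<in>fe_space0 N B basis. variation a b T v = 0"
proof
  fix v assume v: "v \<in> fe_space0 N B basis"
  then have "variation a b touched_region v = 0"
    using assms regular_touched_region fe_space0_subset_admissible_touched_region by blast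
  moreover obtain c where "v = fe_fun N basis c"
    using v unfolding fe_space0_def by blast
  ultimately show "variation a b T v = 0"
    by (simp add: variation_touched_region)
qed

end

theorem mainTheorem1:
  fixes T :: "'s set" and N B :: "'n set" and touches :: "'n \<Rightarrow> 's \<Rightarrow> bool"
    and basis :: "'n \<Rightarrow> 'a::real_vector" and d :: "'a \<Rightarrow> 'b::real_vector"
    and ip0 :: "'s \<Rightarrow> 'a \<Rightarrow> 'a \<Rightarrow> real" and ip1 :: "'s \<Rightarrow> 'b \<Rightarrow> 'b \<Rightarrow> real"
    and dL2 :: "'a \<times> 'b \<Rightarrow> 'a" and dL3 :: "'a \<times> 'b \<Rightarrow> 'b"
    and \<phi> :: 'a
  assumes "finite T" and "finite N" and "B \<subseteq> N"
    and "linear d"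
    and "\<And>s u. linear (ip0 s u)" and "\<And>s w. linear (ip1 s w)"
    and "\<And>i s u w. i \<in> N \<Longrightarrow> s \<in> T \<Longrightarrow> \<not> touches i s \<Longrightarrow>
           ip0 s u (basis i) = 0 \<and> ip1 s w (d (basis i)) = 0"
    and "\<phi> \<in> fe_space N basis"
  shows "(\<forall>U. regular_region touches N T U \<longrightarrow>
            (\<forall>v\<in>admissible touches N B T basis U.
               L2_on ip0 U (dL2 (jet1 d \<phi>)) v + L2_on ip1 U (dL3 (jet1 d \<phi>)) (d v) = 0))
     \<longleftrightarrow> (\<forall>v\<in>fe_space0 N B basis.
               L2_on ip0 T (dL2 (jet1 d \<phi>)) v + L2_on ip1 T (dL3 (jet1 d \<phi>)) (d v) = 0)"
proof -
  interpret fe_variational T touches N basis d ip0 ip1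
    by (rule fe_variational.intro) (fact assms)+
  show ?thesis
    unfolding variation_def[symmetric]
  proof
    assume "\<forall>U. regular_region touches N T U \<longrightarrow>
      (\<forall>v\<in>admissible touches N B T basis U. variation (dL2 (jet1 d \<phi>)) (dL3 (jet1 d \<phi>)) U v = 0)"
    then show "\<forall>v\<in>fe_space0 N B basis. variation (dL2 (jet1 d \<phi>)) (dL3 (jet1 d \<phi>)) T v = 0"
      by (rule local_EL_imp_global_EL)
  qed (auto simp: regular_region_def intro: global_EL_imp_local_EL)
qed

end
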